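(* Let $L=Rd$ with $R,d$ positive integers, and let $\Phi,\Psi$ be two unitary $L\times L$ matrices, partitioned into consecutive column-blocks $\Phi[\ell],\Psi[\ell]$ of size $L\times d$, $1\le \ell\le R$. Let ${\bf x}\in\mathbb{C}^L$, ${\bf x}\neq {\bf 0}$, satisfy $${\bf x}=\sum_{\ell=1}^R \Phi[\ell]{\bf a}[\ell]=\sum_{\ell=1}^R \Psi[\ell]{\bf b}[\ell]$$ with ${\bf a}[\ell],{\bf b}[\ell]\in\mathbb{C}^d$, and let $A=\|{\bf a}\|_{2,0}$, $B=\|{\bf b}\|_{2,0}$. Then $$\frac{1}{2}(A+B)\ge \sqrt{AB}\ge \frac{1}{d\,\mu_{\mathrm B}(\Phi,\Psi)},\qquad\text{where }\ \mu_{\mathrm B}(\Phi,\Psi)=\max_{\ell,r}\frac{1}{d}\rho(\Phi^H[\ell]\Psi[r]).$$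
   Context: For a matrix ${\bf M}$, $\rho({\bf M})=\lambda_{\max}^{1/2}({\bf M}^H{\bf M})$ denotes its spectral norm. For a vector ${\bf a}\in\mathbb{C}^{L}$ viewed as a concatenation of consecutive length-$d$ blocks ${\bf a}[1],\dots,{\bf a}[R]$, $\|{\bf a}\|_{2,0}$ denotes the number of indices $\ell$ with $\|{\bf a}[\ell]\|_2>0$. *)

theory Defs
  imports Complex_Main "Jordan_Normal_Form.Schur_Decomposition" "Jordan_Normal_Form.Char_Poly"
begin

(* Column block  M[l]  (0-indexed l < R): the L x d submatrix made of columns l*d .. l*d+d-1 *)
definition col_block :: "nat \<Rightarrow> complex mat \<Rightarrow> nat \<Rightarrow> complex mat" where
  "col_block d M l = mat (dim_row M) d (\<lambda>(i,j). M $$ (i, l*d + j))"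

definition vec_block :: "nat \<Rightarrow> complex vec \<Rightarrow> nat \<Rightarrow> complex vec" where
  "vec_block d a l = vec d (\<lambda>j. a $ (l*d + j))"

definition vnorm2 :: "complex vec \<Rightarrow> real" where
  "vnorm2 v = sqrt (\<Sum>j<dim_vec v. (cmod (v $ j))\<^sup>2)"

definition norm20 :: "nat \<Rightarrow> nat \<Rightarrow> complex vec \<Rightarrow> nat" where
  "norm20 R d a = card {l. l < R \<and> vnorm2 (vec_block d a l) > 0}"

definition spec_norm :: "complex mat \<Rightarrow> real" where
  "spec_norm M = sqrt (Max {\<mu>::real. eigenvalue (mat_adjoint M * M) (complex_of_real \<mu>)})"

definition block_coherence :: "nat \<Rightarrow> nat \<Rightarrow> complex mat \<Rightarrow> complex mat \<Rightarrow> real" where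
  "block_coherence R d Phi Psi =
     Max {spec_norm (mat_adjoint (col_block d Phi l) * col_block d Psi r) / real d | l r. l < R \<and> r < R}"

definition unitary_mat :: "nat \<Rightarrow> complex mat \<Rightarrow> bool" where
  "unitary_mat n U \<longleftrightarrow> U \<in> carrier_mat n n \<and> mat_adjoint U * U = 1\<^sub>m n \<and> U * mat_adjoint U = 1\<^sub>m n"

end

theory Submission
  imports Defs "HOL-Analysis.Function_Topology" "HOL-Analysis.L2_Norm" "Jordan_Normal_Form.Spectral_Radius"
begin

text \<open>
  Expanding \<open>\<parallel>x\<parallel>\<^sup>2 = \<langle>\<Sigma>\<^sub>\<ell> \<Phi>[\<ell>]a[\<ell>], \<Sigma>\<^sub>r \<Psi>[r]b[r]\<rangle>\<close> gives a double sum of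
  terms \<open>\<langle>a[\<ell>], \<Phi>[\<ell>]\<^sup>H\<Psi>[r] b[r]\<rangle>\<close>, each bounded by
  \<open>d \<mu>\<^sub>B \<parallel>a[\<ell>]\<parallel> \<parallel>b[r]\<parallel>\<close>. Hence \<open>\<parallel>x\<parallel>\<^sup>2 \<le> d \<mu>\<^sub>B (\<Sigma>\<^sub>\<ell> \<parallel>a[\<ell>]\<parallel>) (\<Sigma>\<^sub>r \<parallel>b[r]\<parallel>)\<close>, and
  by Cauchy-Schwarz over the nonzero blocks together with \<open>\<parallel>a\<parallel> = \<parallel>b\<parallel> = \<parallel>x\<parallel>\<close>
  (unitarity) the right-hand side is at most \<open>d \<mu>\<^sub>B \<surd>(AB) \<parallel>x\<parallel>\<^sup>2\<close>.
  The bound \<open>\<parallel>Nv\<parallel> \<le> \<rho>(N)\<parallel>v\<parallel>\<close> comes from the variational characterisation of the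
  largest eigenvalue of the Hermitian matrix \<open>N\<^sup>HN\<close>, obtained here by maximising its
  quadratic form over the (compact) unit sphere.
\<close>

subsection \<open>Inner product and norm on complex vectors\<close>

definition cinner :: "complex vec \<Rightarrow> complex vec \<Rightarrow> complex" where
  "cinner u v = (\<Sum>i<dim_vec v. cnj (u $ i) * v $ i)"

definition sq_norm_vec :: "complex vec \<Rightarrow> real" where
  "sq_norm_vec v = (\<Sum>i<dim_vec v. (cmod (v $ i))\<^sup>2)"

lemma cinner_self: "cinner v v = complex_of_real (sq_norm_vec v)"
  unfolding cinner_def sq_norm_vec_def of_real_sum
  by (intro sum.cong refl) (metis complex_norm_square mult.commute of_real_power)

lemma sq_norm_vec_eq_Re_cinner: "sq_norm_vec v = Re (cinner v v)"
  by (simp add: cinner_self)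

lemma vnorm2_eq_sqrt_sq_norm_vec: "vnorm2 v = sqrt (sq_norm_vec v)"
  unfolding vnorm2_def sq_norm_vec_def ..

lemma sq_norm_vec_nonneg: "sq_norm_vec v \<ge> 0"
  unfolding sq_norm_vec_def by (intro sum_nonneg) auto

lemma sq_norm_vec_eq_0_iff:
  assumes "v \<in> carrier_vec n"
  shows "sq_norm_vec v = 0 \<longleftrightarrow> v = 0\<^sub>v n"
proof
  assume v0: "sq_norm_vec v = 0"
  show "v = 0\<^sub>v n"
  proof (rule eq_vecI)
    fix i assume i: "i < dim_vec (0\<^sub>v n)"
    have "(cmod (v $ i))\<^sup>2 = 0"
      using assms i v0 sum_nonneg_eq_0_iff[of "{..<dim_vec v}" "\<lambda>i. (cmod (v $ i))\<^sup>2"]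
      unfolding sq_norm_vec_def by auto
    then show "v $ i = 0\<^sub>v n $ i" using i by auto
  qed (use assms in auto)
qed (simp add: sq_norm_vec_def)

lemma sq_norm_vec_pos:
  "v \<in> carrier_vec n \<Longrightarrow> v \<noteq> 0\<^sub>v n \<Longrightarrow> sq_norm_vec v > 0"
  using sq_norm_vec_eq_0_iff sq_norm_vec_nonneg by (metis less_eq_real_def)

lemma cinner_commute: "u \<in> carrier_vec n \<Longrightarrow> v \<in> carrier_vec n \<Longrightarrow> cinner u v = cnj (cinner v u)"
  unfolding cinner_def by (auto simp: mult.commute)

lemma cinner_add_left:
  "u \<in> carrier_vec n \<Longrightarrow> v \<in> carrier_vec n \<Longrightarrow> w \<in> carrier_vec n \<Longrightarrow>
   cinner (u + v) w = cinner u w + cinner v w"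
  unfolding cinner_def by (auto simp: sum.distrib algebra_simps)

lemma cinner_add_right:
  "u \<in> carrier_vec n \<Longrightarrow> v \<in> carrier_vec n \<Longrightarrow> w \<in> carrier_vec n \<Longrightarrow>
   cinner u (v + w) = cinner u v + cinner u w"
  unfolding cinner_def by (auto simp: sum.distrib algebra_simps)

lemma cinner_diff_right:
  "u \<in> carrier_vec n \<Longrightarrow> v \<in> carrier_vec n \<Longrightarrow> w \<in> carrier_vec n \<Longrightarrow>
   cinner u (v - w) = cinner u v - cinner u w"
  unfolding cinner_def by (auto simp: sum_subtractf algebra_simps)

lemma cinner_smult_left:
  "u \<in> carrier_vec n \<Longrightarrow> w \<in> carrier_vec n \<Longrightarrow> cinner (c \<cdot>\<^sub>v u) w = cnj c * cinner u w"
  unfolding cinner_def by (auto simp: sum_distrib_left algebra_simps)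

lemma cinner_smult_right:
  "u \<in> carrier_vec n \<Longrightarrow> w \<in> carrier_vec n \<Longrightarrow> cinner u (c \<cdot>\<^sub>v w) = c * cinner u w"
  unfolding cinner_def by (auto simp: sum_distrib_left algebra_simps)

lemma sq_norm_vec_add:
  assumes u: "u \<in> carrier_vec n" and w: "w \<in> carrier_vec n"
  shows "sq_norm_vec (u + w) = sq_norm_vec u + sq_norm_vec w + 2 * Re (cinner w u)"
proof -
  have "cinner (u + w) (u + w) = cinner u u + cinner u w + cinner w u + cinner w w"
    using u w by (simp add: cinner_add_left cinner_add_right)
  moreover have "Re (cinner u w) = Re (cinner w u)" using cinner_commute[OF u w] by simp
  ultimately show ?thesis unfolding sq_norm_vec_eq_Re_cinner by simp
qed

lemma sq_norm_vec_smult: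
  "w \<in> carrier_vec n \<Longrightarrow> sq_norm_vec (complex_of_real t \<cdot>\<^sub>v w) = t\<^sup>2 * sq_norm_vec w"
  unfolding sq_norm_vec_eq_Re_cinner
  by (simp add: cinner_smult_left cinner_smult_right power2_eq_square)

lemma cinner_cauchy_schwarz:
  assumes u: "u \<in> carrier_vec n" and v: "v \<in> carrier_vec n"
  shows "cmod (cinner u v) \<le> sqrt (sq_norm_vec u) * sqrt (sq_norm_vec v)"
proof -
  have "cmod (cinner u v) \<le> (\<Sum>i<n. cmod (cnj (u $ i) * v $ i))"
    unfolding cinner_def using v by (simp add: norm_sum)
  also have "\<dots> = (\<Sum>i<n. \<bar>cmod (u $ i)\<bar> * \<bar>cmod (v $ i)\<bar>)"
    by (simp add: norm_mult)
  also have "\<dots> \<le> L2_set (\<lambda>i. cmod (u $ i)) {..<n} * L2_set (\<lambda>i. cmod (v $ i)) {..<n}"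
    by (rule L2_set_mult_ineq)
  also have "\<dots> = sqrt (sq_norm_vec u) * sqrt (sq_norm_vec v)"
    unfolding L2_set_def sq_norm_vec_def using u v by simp
  finally show ?thesis .
qed

lemma sq_norm_vec_le_sum_cross_cinner:
  assumes x: "x \<in> carrier_vec n"
    and p: "\<And>l. p l \<in> carrier_vec n" and q: "\<And>r. q r \<in> carrier_vec n"
    and xp: "\<forall>i<n. x $ i = (\<Sum>l<R. p l $ i)" and xq: "\<forall>i<n. x $ i = (\<Sum>r<S. q r $ i)"
  shows "sq_norm_vec x \<le> (\<Sum>l<R. \<Sum>r<S. cmod (cinner (p l) (q r)))"
proof -
  have "cinner x x = (\<Sum>i<n. cnj (\<Sum>l<R. p l $ i) * (\<Sum>r<S. q r $ i))"
    unfolding cinner_def using x xp xq by (intro sum.cong) auto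
  also have "\<dots> = (\<Sum>i<n. \<Sum>l<R. \<Sum>r<S. cnj (p l $ i) * q r $ i)"
    by (simp add: sum_product)
  also have "\<dots> = (\<Sum>l<R. \<Sum>r<S. \<Sum>i<n. cnj (p l $ i) * q r $ i)"
    by (subst sum.swap) (simp add: sum.swap[of _ "{..<n}"])
  also have "\<dots> = (\<Sum>l<R. \<Sum>r<S. cinner (p l) (q r))"
  proof -
    have "dim_vec (q r) = n" for r using q[of r] by simp
    then show ?thesis unfolding cinner_def by simp
  qed
  finally have "sq_norm_vec x = cmod (\<Sum>l<R. \<Sum>r<S. cinner (p l) (q r))"
    using sq_norm_vec_nonneg[of x] by (metis cinner_self norm_of_real abs_of_nonneg)
  also have "\<dots> \<le> (\<Sum>l<R. \<Sum>r<S. cmod (cinner (p l) (q r)))"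
    by (rule order_trans[OF norm_sum sum_mono[OF norm_sum]])
  finally show ?thesis .
qed

definition quad_form :: "complex mat \<Rightarrow> complex vec \<Rightarrow> real" where
  "quad_form H v = Re (cinner v (H *\<^sub>v v))"

definition hermitian_mat :: "nat \<Rightarrow> complex mat \<Rightarrow> bool" where
  "hermitian_mat n H \<longleftrightarrow> H \<in> carrier_mat n n \<and> (\<forall>i<n. \<forall>j<n. H $$ (j,i) = cnj (H $$ (i,j)))"

lemma mult_mat_vec_index_sum:
  "A \<in> carrier_mat n m \<Longrightarrow> v \<in> carrier_vec m \<Longrightarrow> i < n \<Longrightarrow>
   (A *\<^sub>v v) $ i = (\<Sum>j<m. A $$ (i,j) * v $ j)"
  by (auto simp: scalar_prod_def atLeast0LessThan)

lemma mat_adjoint_carrier: "A \<in> carrier_mat m n \<Longrightarrow> mat_adjoint A \<in> carrier_mat n m"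
  unfolding mat_adjoint_def by auto

lemma mat_adjoint_index:
  "A \<in> carrier_mat m n \<Longrightarrow> i < n \<Longrightarrow> j < m \<Longrightarrow> mat_adjoint A $$ (i,j) = cnj (A $$ (j,i))"
  unfolding mat_adjoint_def by (auto simp: mat_of_rows_def)

lemma cinner_mult_mat_vec:
  assumes A: "A \<in> carrier_mat n m" and u: "u \<in> carrier_vec n" and v: "v \<in> carrier_vec m"
  shows "cinner u (A *\<^sub>v v) = (\<Sum>i<n. \<Sum>j<m. cnj (u $ i) * A $$ (i,j) * v $ j)"
proof -
  have "(A *\<^sub>v v) $ i = (\<Sum>j<m. A $$ (i,j) * v $ j)" if "i < n" for i
    by (rule mult_mat_vec_index_sum[OF A v that])
  then show ?thesis unfolding cinner_def using A by (simp add: sum_distrib_left mult.assoc)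
qed

lemma cinner_mat_adjoint:
  assumes A: "A \<in> carrier_mat m n" and u: "u \<in> carrier_vec n" and w: "w \<in> carrier_vec m"
  shows "cinner u (mat_adjoint A *\<^sub>v w) = cinner (A *\<^sub>v u) w"
proof -
  have "cinner u (mat_adjoint A *\<^sub>v w) = (\<Sum>i<n. \<Sum>j<m. cnj (u $ i) * cnj (A $$ (j,i)) * w $ j)"
    using cinner_mult_mat_vec[OF mat_adjoint_carrier[OF A] u w] by (simp add: mat_adjoint_index[OF A])
  also have "\<dots> = cnj (\<Sum>j<m. \<Sum>i<n. cnj (w $ j) * A $$ (j,i) * u $ i)"
    by (subst sum.swap) (simp add: mult_ac)
  also have "\<dots> = cnj (cinner w (A *\<^sub>v u))"
    using cinner_mult_mat_vec[OF A w u] by simp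
  also have "\<dots> = cinner (A *\<^sub>v u) w"
    using cinner_commute[OF mult_mat_vec_carrier[OF A u] w] by simp
  finally show ?thesis .
qed

lemma hermitian_cinner_swap:
  assumes H: "hermitian_mat n H" and u: "u \<in> carrier_vec n" and v: "v \<in> carrier_vec n"
  shows "cinner u (H *\<^sub>v v) = cnj (cinner v (H *\<^sub>v u))"
proof -
  have Hc: "H \<in> carrier_mat n n" and H_sym: "\<And>i j. i<n \<Longrightarrow> j<n \<Longrightarrow> H $$ (j,i) = cnj (H $$ (i,j))"
    using H unfolding hermitian_mat_def by blast+
  have "cinner u (H *\<^sub>v v) = (\<Sum>i<n. \<Sum>j<n. cnj (u $ i) * H $$ (i,j) * v $ j)"
    by (rule cinner_mult_mat_vec[OF Hc u v])
  also have "\<dots> = (\<Sum>j<n. \<Sum>i<n. cnj (cnj (v $ j) * H $$ (j,i) * u $ i))"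
  proof (subst sum.swap, intro sum.cong refl)
    fix i j assume "j \<in> {..<n}" "i \<in> {..<n}"
    then have "H $$ (i,j) = cnj (H $$ (j,i))" using H_sym[of j i] by simp
    then show "cnj (u $ i) * H $$ (i,j) * v $ j = cnj (cnj (v $ j) * H $$ (j,i) * u $ i)"
      by (simp add: mult_ac)
  qed
  also have "\<dots> = cnj (cinner v (H *\<^sub>v u))"
    using cinner_mult_mat_vec[OF Hc v u] by simp
  finally show ?thesis .
qed

lemma quad_form_add:
  assumes H: "hermitian_mat n H" and u: "u \<in> carrier_vec n" and w: "w \<in> carrier_vec n"
  shows "quad_form H (u + w) = quad_form H u + quad_form H w + 2 * Re (cinner w (H *\<^sub>v u))"
proof -
  have Hc: "H \<in> carrier_mat n n" using H unfolding hermitian_mat_def by auto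
  have "cinner (u + w) (H *\<^sub>v (u + w))
        = cinner u (H *\<^sub>v u) + cinner u (H *\<^sub>v w) + cinner w (H *\<^sub>v u) + cinner w (H *\<^sub>v w)"
    using Hc u w by (simp add: mult_add_distrib_mat_vec cinner_add_left cinner_add_right)
  moreover have "Re (cinner u (H *\<^sub>v w)) = Re (cinner w (H *\<^sub>v u))"
    using hermitian_cinner_swap[OF H u w] by simp
  ultimately show ?thesis unfolding quad_form_def by simp
qed

lemma quad_form_smult:
  "H \<in> carrier_mat n n \<Longrightarrow> w \<in> carrier_vec n \<Longrightarrow>
   quad_form H (complex_of_real t \<cdot>\<^sub>v w) = t\<^sup>2 * quad_form H w"
  unfolding quad_form_def
  by (simp add: mult_mat_vec cinner_smult_left cinner_smult_right power2_eq_square)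

lemma quad_form_zero: "H \<in> carrier_mat n n \<Longrightarrow> quad_form H (0\<^sub>v n) = 0"
  unfolding quad_form_def cinner_def by simp

lemma adjoint_mult_self_index:
  assumes N: "N \<in> carrier_mat k n" and i: "i < n" and j: "j < n"
  shows "(mat_adjoint N * N) $$ (i,j) = (\<Sum>l<k. cnj (N $$ (l,i)) * N $$ (l,j))"
  using N i j mat_adjoint_carrier[OF N]
  by (auto simp: scalar_prod_def mat_adjoint_index atLeast0LessThan intro!: sum.cong)

lemma hermitian_adjoint_mult_self:
  assumes N: "N \<in> carrier_mat k n"
  shows "hermitian_mat n (mat_adjoint N * N)"
  unfolding hermitian_mat_def
proof (intro conjI allI impI)
  show "mat_adjoint N * N \<in> carrier_mat n n" using N mat_adjoint_carrier[OF N] by simp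
  fix i j assume i: "i < n" and j: "j < n"
  show "(mat_adjoint N * N) $$ (j, i) = cnj ((mat_adjoint N * N) $$ (i, j))"
    unfolding adjoint_mult_self_index[OF N j i] adjoint_mult_self_index[OF N i j]
    by (simp add: mult.commute)
qed

lemma quad_form_adjoint_mult_self:
  assumes N: "N \<in> carrier_mat k n" and v: "v \<in> carrier_vec n"
  shows "quad_form (mat_adjoint N * N) v = sq_norm_vec (N *\<^sub>v v)"
proof -
  have "mat_adjoint N * N *\<^sub>v v = mat_adjoint N *\<^sub>v (N *\<^sub>v v)"
    by (rule assoc_mult_mat_vec[OF mat_adjoint_carrier[OF N] N v])
  then have eq: "cinner v (mat_adjoint N * N *\<^sub>v v) = cinner (N *\<^sub>v v) (N *\<^sub>v v)"
    using cinner_mat_adjoint[OF N v mult_mat_vec_carrier[OF N v]] by (simp only:)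
  show ?thesis unfolding quad_form_def sq_norm_vec_eq_Re_cinner eq ..
qed

subsection \<open>The largest eigenvalue of a Hermitian matrix\<close>

lemma continuous_on_coordinate: "continuous_on A (\<lambda>f :: 'a \<Rightarrow> 'b::topological_space. f i)"
  by (rule continuous_on_subset[OF continuous_on_product_coordinates]) auto

lemma compact_coordinate_unit_sphere:
  "compact {f :: nat \<Rightarrow> complex. (\<forall>i\<ge>n. f i = 0) \<and> (\<Sum>i<n. (cmod (f i))\<^sup>2) = 1}"
  (is "compact ?S")
proof -
  define T :: "complex set" where "T = (\<lambda>(a, b). Complex a b) ` ({-1..1} \<times> {-1..1})"
  have "compact T" unfolding T_def
    by (intro compact_continuous_image compact_Times compact_Icc) (simp add: case_prod_beta Complex_eq continuous_intros)
  have unit_disc: "z \<in> T" if "cmod z \<le> 1" for z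
    using that abs_Re_le_cmod[of z] abs_Im_le_cmod[of z] unfolding T_def
    by (intro image_eqI[of _ _ "(Re z, Im z)"]) auto
  define K :: "(nat \<Rightarrow> complex) set" where "K = Pi\<^sub>E UNIV (\<lambda>i. if i < n then T else {0})"
  have "compactin (product_topology (\<lambda>i. euclidean) UNIV) K"
    unfolding K_def using \<open>compact T\<close> by (subst compactin_PiE) auto
  then have "compact K" by (simp add: euclidean_product_topology)
  have "closed {f::nat \<Rightarrow> complex. (\<Sum>i<n. (cmod (f i))\<^sup>2) = 1}"
    by (intro closed_Collect_eq continuous_intros continuous_on_coordinate)
  moreover have "?S = K \<inter> {f. (\<Sum>i<n. (cmod (f i))\<^sup>2) = 1}"
  proof (intro equalityI subsetI)
    fix f assume f: "f \<in> ?S"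
    have "cmod (f i) \<le> 1" if "i < n" for i
    proof -
      have "(cmod (f i))\<^sup>2 \<le> (\<Sum>i<n. (cmod (f i))\<^sup>2)"
        by (rule member_le_sum) (use that in auto)
      then show ?thesis using f by (simp add: power_le_one_iff abs_le_square_iff)
    qed
    then show "f \<in> K \<inter> {f. (\<Sum>i<n. (cmod (f i))\<^sup>2) = 1}"
      using f unit_disc unfolding K_def by (auto simp: PiE_iff)
  next
    fix f assume f: "f \<in> K \<inter> {f. (\<Sum>i<n. (cmod (f i))\<^sup>2) = 1}"
    then have "f i \<in> (if i < n then T else {0})" for i
      unfolding K_def by (blast intro: PiE_mem)
    then have "f i = 0" if "n \<le> i" for i
      using that by (metis empty_iff insert_iff leD)
    then show "f \<in> ?S" using f by blast
  qed
  ultimately show ?thesis using \<open>compact K\<close> by (simp add: compact_Int_closed)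
qed

lemma quad_form_attains_max_on_unit_sphere:
  assumes H: "H \<in> carrier_mat n n" and n: "n > 0"
  obtains u where "u \<in> carrier_vec n" "sq_norm_vec u = 1"
    "\<And>v. v \<in> carrier_vec n \<Longrightarrow> sq_norm_vec v = 1 \<Longrightarrow> quad_form H v \<le> quad_form H u"
proof -
  define S where "S = {f :: nat \<Rightarrow> complex. (\<forall>i\<ge>n. f i = 0) \<and> (\<Sum>i<n. (cmod (f i))\<^sup>2) = 1}"
  define F where "F f = quad_form H (vec n f)" for f
  have F_expand: "F f = Re (\<Sum>i<n. \<Sum>j<n. cnj (f i) * H $$ (i,j) * f j)" for f
    unfolding F_def quad_form_def by (subst cinner_mult_mat_vec[OF H]) auto
  have "continuous_on S F"
    unfolding F_expand by (intro continuous_intros continuous_on_coordinate)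
  have in_S: "(\<lambda>i. if i < n then v $ i else 0) \<in> S" if "v \<in> carrier_vec n" "sq_norm_vec v = 1" for v
    using that unfolding S_def sq_norm_vec_def by auto
  have "sq_norm_vec (unit_vec n 0) = (\<Sum>i<n. if i = 0 then 1 else 0)"
    unfolding sq_norm_vec_def by (intro sum.cong) auto
  then have "S \<noteq> {}" using in_S[of "unit_vec n 0"] n by auto
  moreover have "compact S" unfolding S_def by (rule compact_coordinate_unit_sphere)
  ultimately obtain f0 where f0: "f0 \<in> S" and max: "\<And>g. g \<in> S \<Longrightarrow> F g \<le> F f0"
    using continuous_attains_sup[of S F] \<open>continuous_on S F\<close> by blast
  have restrict: "vec n (\<lambda>i. if i < n then v $ i else 0) = v" if "v \<in> carrier_vec n" for v
    using that by auto
  show ?thesis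
  proof
    show "vec n f0 \<in> carrier_vec n" by simp
    show "sq_norm_vec (vec n f0) = 1" using f0 unfolding S_def sq_norm_vec_def by simp
    fix v assume "v \<in> carrier_vec n" "sq_norm_vec v = 1"
    then show "quad_form H v \<le> quad_form H (vec n f0)"
      using max[OF in_S] restrict unfolding F_def by metis
  qed
qed

lemma quadratic_nonneg_imp_linear_coeff_eq_0:
  fixes a b :: real
  assumes "b \<ge> 0" and "a \<ge> 0" and nonneg: "\<And>t. 0 \<le> t\<^sup>2 * b + 2 * t * a"
  shows "a = 0"
proof (rule ccontr)
  assume "a \<noteq> 0"
  with \<open>a \<ge> 0\<close> have "a > 0" by simp
  define t where "t = - a / (b + 1)"
  have "0 \<le> (t\<^sup>2 * b + 2 * t * a) * (b + 1)\<^sup>2" using nonneg[of t] by simp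
  also have "\<dots> = b * (t * (b + 1))\<^sup>2 + 2 * a * (b + 1) * (t * (b + 1))"
    by (simp add: power2_eq_square algebra_simps)
  also have "t * (b + 1) = - a" unfolding t_def using \<open>b \<ge> 0\<close> by simp
  also have "b * (- a)\<^sup>2 + 2 * a * (b + 1) * (- a) = - (a\<^sup>2 * (b + 2))"
    by (simp add: power2_eq_square algebra_simps)
  finally have "a\<^sup>2 * (b + 2) \<le> 0" by simp
  moreover have "a\<^sup>2 * (b + 2) > 0" using \<open>a > 0\<close> \<open>b \<ge> 0\<close> by simp
  ultimately show False by simp
qed

lemma hermitian_quad_form_maximizer_eigenvector:
  assumes H: "hermitian_mat n H" and u: "u \<in> carrier_vec n"
    and bound: "\<And>v. v \<in> carrier_vec n \<Longrightarrow> quad_form H v \<le> lam * sq_norm_vec v"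
    and attained: "quad_form H u = lam * sq_norm_vec u"
  shows "H *\<^sub>v u = complex_of_real lam \<cdot>\<^sub>v u"
proof -
  have Hc: "H \<in> carrier_mat n n" using H unfolding hermitian_mat_def by blast
  define gap where "gap v = lam * sq_norm_vec v - quad_form H v" for v
  have gap_nonneg: "gap v \<ge> 0" if "v \<in> carrier_vec n" for v
    using bound[OF that] unfolding gap_def by simp
  define w where "w = complex_of_real lam \<cdot>\<^sub>v u - H *\<^sub>v u"
  have w: "w \<in> carrier_vec n" unfolding w_def using u Hc by simp
  have Hu: "H *\<^sub>v u \<in> carrier_vec n" using Hc u by simp
  \<comment> \<open>\<open>gap\<close> vanishes at \<open>u\<close>, so along the line \<open>u + t w\<close> its first-order term must vanish.\<close>
  have gap_line: "gap (u + complex_of_real t \<cdot>\<^sub>v w) = t\<^sup>2 * gap w + 2 * t * sq_norm_vec w" for t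
  proof -
    have tw: "complex_of_real t \<cdot>\<^sub>v w \<in> carrier_vec n" using w by simp
    have "cinner w w = cinner w (complex_of_real lam \<cdot>\<^sub>v u) - cinner w (H *\<^sub>v u)"
      using cinner_diff_right[OF w _ Hu, of "complex_of_real lam \<cdot>\<^sub>v u"] u
      by (simp add: w_def[symmetric])
    then have "Re (cinner w w) = lam * Re (cinner w u) - Re (cinner w (H *\<^sub>v u))"
      by (simp add: cinner_smult_right[OF w u])
    then have "lam * (t * Re (cinner w u)) = t * Re (cinner w w) + t * Re (cinner w (H *\<^sub>v u))"
      by (simp add: right_diff_distrib mult.left_commute)
    then show ?thesis
      using sq_norm_vec_add[OF u tw] sq_norm_vec_smult[OF w] cinner_smult_left[OF w u]
        quad_form_add[OF H u tw] quad_form_smult[OF Hc w] cinner_smult_left[OF w Hu] attained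
      unfolding gap_def sq_norm_vec_eq_Re_cinner[of w] by (simp add: algebra_simps)
  qed
  have "sq_norm_vec w = 0"
  proof (rule quadratic_nonneg_imp_linear_coeff_eq_0[OF gap_nonneg[OF w] sq_norm_vec_nonneg])
    fix t :: real
    show "0 \<le> t\<^sup>2 * gap w + 2 * t * sq_norm_vec w"
      using gap_nonneg[of "u + complex_of_real t \<cdot>\<^sub>v w"] u w unfolding gap_line by simp
  qed
  then have w0: "w = 0\<^sub>v n" using sq_norm_vec_eq_0_iff[OF w] by simp
  show ?thesis
  proof (rule eq_vecI)
    fix i assume "i < dim_vec (complex_of_real lam \<cdot>\<^sub>v u)"
    then have "i < n" using u by simp
    with w0 show "(H *\<^sub>v u) $ i = (complex_of_real lam \<cdot>\<^sub>v u) $ i"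
      unfolding w_def using u Hu by (metis carrier_vecD index_minus_vec(1) index_smult_vec(2)
        index_zero_vec(1) right_minus_eq)
  qed (use u Hc in simp)
qed

lemma hermitian_max_eigenvalue:
  assumes H: "hermitian_mat n H" and n: "n > 0"
  obtains lam where "eigenvalue H (complex_of_real lam)"
    "\<And>v. v \<in> carrier_vec n \<Longrightarrow> quad_form H v \<le> lam * sq_norm_vec v"
proof -
  have Hc: "H \<in> carrier_mat n n" using H unfolding hermitian_mat_def by blast
  obtain u where u: "u \<in> carrier_vec n" and u1: "sq_norm_vec u = 1"
    and max: "\<And>v. v \<in> carrier_vec n \<Longrightarrow> sq_norm_vec v = 1 \<Longrightarrow> quad_form H v \<le> quad_form H u"
    using quad_form_attains_max_on_unit_sphere[OF Hc n] by blast
  define lam where "lam = quad_form H u"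
  have bound: "quad_form H v \<le> lam * sq_norm_vec v" if v: "v \<in> carrier_vec n" for v
  proof (cases "v = 0\<^sub>v n")
    case True
    then show ?thesis using quad_form_zero[OF Hc] by (simp add: sq_norm_vec_def)
  next
    case False
    define c where "c = 1 / sqrt (sq_norm_vec v)"
    have pos: "sq_norm_vec v > 0" using sq_norm_vec_pos[OF v False] .
    then have c2: "c\<^sup>2 = 1 / sq_norm_vec v" unfolding c_def by (simp add: power_divide)
    have "sq_norm_vec (complex_of_real c \<cdot>\<^sub>v v) = 1" using sq_norm_vec_smult[OF v] c2 pos by simp
    then have "quad_form H (complex_of_real c \<cdot>\<^sub>v v) \<le> lam" unfolding lam_def using v by (intro max) simp
    then have "quad_form H v / sq_norm_vec v \<le> lam" using quad_form_smult[OF Hc v] c2 by simp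
    then show ?thesis using pos by (simp add: divide_le_eq mult.commute)
  qed
  have "H *\<^sub>v u = complex_of_real lam \<cdot>\<^sub>v u"
    using hermitian_quad_form_maximizer_eigenvector[OF H u bound] u1 unfolding lam_def by simp
  moreover have "u \<noteq> 0\<^sub>v n" using u1 by (auto simp: sq_norm_vec_def)
  ultimately have "eigenvalue H (complex_of_real lam)"
    unfolding eigenvalue_def eigenvector_def using u Hc by auto
  then show ?thesis using bound that by blast
qed

subsection \<open>The spectral norm\<close>

lemma finite_real_eigenvalues:
  "H \<in> carrier_mat n n \<Longrightarrow> finite {\<mu>::real. eigenvalue H (complex_of_real \<mu>)}"
proof -
  assume H: "H \<in> carrier_mat n n"
  have "{\<mu>::real. eigenvalue H (complex_of_real \<mu>)} = complex_of_real -` spectrum H"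
    unfolding spectrum_def by auto
  then show ?thesis using card_finite_spectrum(1)[OF H] by (metis finite_vimageI inj_of_real)
qed

lemma eigenvalue_adjoint_mult_self_nonneg:
  assumes N: "N \<in> carrier_mat k n" and ev: "eigenvalue (mat_adjoint N * N) (complex_of_real \<mu>)"
  shows "\<mu> \<ge> 0"
proof -
  have "mat_adjoint N * N \<in> carrier_mat n n" using N mat_adjoint_carrier[OF N] by simp
  then obtain w where w: "w \<in> carrier_vec n" "w \<noteq> 0\<^sub>v n"
    and eig: "mat_adjoint N * N *\<^sub>v w = complex_of_real \<mu> \<cdot>\<^sub>v w"
    using ev unfolding eigenvalue_def eigenvector_def by auto
  have "\<mu> * sq_norm_vec w = sq_norm_vec (N *\<^sub>v w)"
    using quad_form_adjoint_mult_self[OF N w(1)] cinner_smult_right[OF w(1) w(1)]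
    unfolding quad_form_def eig by (simp add: sq_norm_vec_eq_Re_cinner)
  then show ?thesis
    using sq_norm_vec_pos[OF w] sq_norm_vec_nonneg[of "N *\<^sub>v w"] by (metis zero_le_mult_iff not_le)
qed

lemma spec_norm_nonneg:
  assumes N: "N \<in> carrier_mat k n" and n: "n > 0"
  shows "spec_norm N \<ge> 0"
proof -
  let ?H = "mat_adjoint N * N"
  obtain lam where ev: "eigenvalue ?H (complex_of_real lam)"
    using hermitian_max_eigenvalue[OF hermitian_adjoint_mult_self[OF N] n] by blast
  have "?H \<in> carrier_mat n n" using N mat_adjoint_carrier[OF N] by simp
  then have "lam \<le> Max {\<mu>::real. eigenvalue ?H (complex_of_real \<mu>)}"
    using ev finite_real_eigenvalues by (intro Max_ge) auto
  then show ?thesis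
    unfolding spec_norm_def using eigenvalue_adjoint_mult_self_nonneg[OF N ev] by simp
qed

lemma sq_norm_vec_mult_le_spec_norm:
  assumes N: "N \<in> carrier_mat k n" and n: "n > 0" and v: "v \<in> carrier_vec n"
  shows "sqrt (sq_norm_vec (N *\<^sub>v v)) \<le> spec_norm N * sqrt (sq_norm_vec v)"
proof -
  let ?H = "mat_adjoint N * N"
  obtain lam where ev: "eigenvalue ?H (complex_of_real lam)"
    and bound: "\<And>v. v \<in> carrier_vec n \<Longrightarrow> quad_form ?H v \<le> lam * sq_norm_vec v"
    using hermitian_max_eigenvalue[OF hermitian_adjoint_mult_self[OF N] n] by blast
  let ?lam_max = "Max {\<mu>::real. eigenvalue ?H (complex_of_real \<mu>)}"
  have "?H \<in> carrier_mat n n" using N mat_adjoint_carrier[OF N] by simp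
  then have "lam \<le> ?lam_max" using ev finite_real_eigenvalues by (intro Max_ge) auto
  have "sq_norm_vec (N *\<^sub>v v) \<le> lam * sq_norm_vec v"
    using bound[OF v] quad_form_adjoint_mult_self[OF N v] by simp
  also have "\<dots> \<le> ?lam_max * sq_norm_vec v"
    using \<open>lam \<le> ?lam_max\<close> sq_norm_vec_nonneg by (rule mult_right_mono)
  finally have "sqrt (sq_norm_vec (N *\<^sub>v v)) \<le> sqrt (?lam_max * sq_norm_vec v)" by simp
  then show ?thesis unfolding spec_norm_def by (simp add: real_sqrt_mult)
qed

lemma cinner_mult_mat_vec_le_spec_norm:
  assumes N: "N \<in> carrier_mat k n" and n: "n > 0" and u: "u \<in> carrier_vec k" and v: "v \<in> carrier_vec n"
  shows "cmod (cinner u (N *\<^sub>v v)) \<le> spec_norm N * sqrt (sq_norm_vec u) * sqrt (sq_norm_vec v)"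
proof -
  have "cmod (cinner u (N *\<^sub>v v)) \<le> sqrt (sq_norm_vec u) * sqrt (sq_norm_vec (N *\<^sub>v v))"
    using cinner_cauchy_schwarz[OF u] N v by simp
  also have "\<dots> \<le> sqrt (sq_norm_vec u) * (spec_norm N * sqrt (sq_norm_vec v))"
    by (rule mult_left_mono[OF sq_norm_vec_mult_le_spec_norm[OF N n v]]) (simp add: sq_norm_vec_nonneg)
  finally show ?thesis by (simp add: mult_ac)
qed

subsection \<open>Block decompositions\<close>

lemma col_block_carrier: "M \<in> carrier_mat L L' \<Longrightarrow> col_block d M l \<in> carrier_mat L d"
  by (simp add: col_block_def)

lemma vec_block_carrier: "vec_block d a l \<in> carrier_vec d"
  by (simp add: vec_block_def)

lemma sum_lessThan_mult_eq_sum_blocks: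
  fixes f :: "nat \<Rightarrow> 'a::comm_monoid_add"
  shows "(\<Sum>k<R*d. f k) = (\<Sum>l<R. \<Sum>j<d. f (l*d + j))"
proof -
  have "(\<Sum>k<R*d. f k) = (\<Sum>l<R. sum f {l*d..<l*d + d})" using sum.nat_group[of f d R] by simp
  also have "\<dots> = (\<Sum>l<R. \<Sum>j<d. f (l*d + j))"
  proof (rule sum.cong[OF refl])
    fix l
    have "sum f {l*d..<l*d + d} = sum f {0 + l*d..<d + l*d}" by (simp add: add.commute)
    also have "\<dots> = (\<Sum>j=0..<d. f (j + l*d))" by (rule sum.shift_bounds_nat_ivl)
    finally show "sum f {l*d..<l*d + d} = (\<Sum>j<d. f (l*d + j))"
      by (simp add: atLeast0LessThan add.commute)
  qed
  finally show ?thesis .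
qed

lemma mult_mat_vec_eq_sum_blocks:
  assumes M: "M \<in> carrier_mat L (R*d)" and a: "a \<in> carrier_vec (R*d)" and i: "i < L"
  shows "(M *\<^sub>v a) $ i = (\<Sum>l<R. (col_block d M l *\<^sub>v vec_block d a l) $ i)"
proof -
  have "(M *\<^sub>v a) $ i = (\<Sum>l<R. \<Sum>j<d. M $$ (i, l*d + j) * a $ (l*d + j))"
    using mult_mat_vec_index_sum[OF M a i] by (simp add: sum_lessThan_mult_eq_sum_blocks)
  also have "\<dots> = (\<Sum>l<R. (col_block d M l *\<^sub>v vec_block d a l) $ i)"
    using M i by (simp add: mult_mat_vec_index_sum[OF col_block_carrier[OF M] vec_block_carrier i])
      (simp add: col_block_def vec_block_def)
  finally show ?thesis .
qed

lemma sq_norm_vec_eq_sum_blocks: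
  "a \<in> carrier_vec (R*d) \<Longrightarrow> sq_norm_vec a = (\<Sum>l<R. sq_norm_vec (vec_block d a l))"
  unfolding sq_norm_vec_def by (simp add: sum_lessThan_mult_eq_sum_blocks vec_block_def)

lemma sq_norm_vec_mult_unitary:
  assumes U: "unitary_mat L U" and a: "a \<in> carrier_vec L"
  shows "sq_norm_vec (U *\<^sub>v a) = sq_norm_vec a"
proof -
  have Uc: "U \<in> carrier_mat L L" and UU: "mat_adjoint U * U = 1\<^sub>m L"
    using U unfolding unitary_mat_def by auto
  have "sq_norm_vec (U *\<^sub>v a) = quad_form (mat_adjoint U * U) a"
    by (rule quad_form_adjoint_mult_self[OF Uc a, symmetric])
  also have "\<dots> = sq_norm_vec a" unfolding UU quad_form_def sq_norm_vec_eq_Re_cinner using a by simp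
  finally show ?thesis .
qed

lemma sum_le_sqrt_card_support_mult_sqrt_sum_squares:
  fixes \<alpha> :: "nat \<Rightarrow> real"
  assumes nonneg: "\<And>l. \<alpha> l \<ge> 0"
  shows "(\<Sum>l<R. \<alpha> l) \<le> sqrt (card {l. l < R \<and> \<alpha> l > 0}) * sqrt (\<Sum>l<R. (\<alpha> l)\<^sup>2)"
proof -
  define S where "S = {l. l < R \<and> \<alpha> l > 0}"
  have SR: "S \<subseteq> {..<R}" and "finite S" unfolding S_def by auto
  have "(\<Sum>l<R. \<alpha> l) = (\<Sum>l\<in>S. \<alpha> l)"
    using nonneg SR by (intro sum.mono_neutral_right) (auto simp: S_def not_less intro: antisym)
  also have "\<dots> = (\<Sum>l\<in>S. \<bar>1\<bar> * \<bar>\<alpha> l\<bar>)" using nonneg by simp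
  also have "\<dots> \<le> L2_set (\<lambda>_. 1) S * L2_set \<alpha> S" by (rule L2_set_mult_ineq)
  also have "L2_set (\<lambda>_. 1) S = sqrt (card S)" unfolding L2_set_def by simp
  also have "L2_set \<alpha> S \<le> sqrt (\<Sum>l<R. (\<alpha> l)\<^sup>2)"
    unfolding L2_set_def by (intro real_sqrt_le_mono sum_mono2) (use SR in auto)
  finally show ?thesis unfolding S_def[symmetric]
    by (meson mult_left_mono order_trans real_sqrt_ge_zero of_nat_0_le_iff)
qed

lemma sum_vnorm2_blocks_le:
  assumes "a \<in> carrier_vec (R*d)"
  shows "(\<Sum>l<R. vnorm2 (vec_block d a l)) \<le> sqrt (norm20 R d a) * sqrt (sq_norm_vec a)"
  using sum_le_sqrt_card_support_mult_sqrt_sum_squares[of "\<lambda>l. vnorm2 (vec_block d a l)" R]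
  unfolding norm20_def vnorm2_eq_sqrt_sq_norm_vec sq_norm_vec_eq_sum_blocks[OF assms]
  by (simp add: sq_norm_vec_nonneg)

lemma spec_norm_le_block_coherence:
  assumes "d > 0" and "l < R" and "r < R"
  shows "spec_norm (mat_adjoint (col_block d Phi l) * col_block d Psi r)
           \<le> real d * block_coherence R d Phi Psi"
proof -
  have "spec_norm (mat_adjoint (col_block d Phi l) * col_block d Psi r) / real d
          \<le> block_coherence R d Phi Psi"
    unfolding block_coherence_def using assms
    by (intro Max_ge) (auto intro: finite_image_set2)
  then show ?thesis using \<open>d > 0\<close> by (simp add: divide_le_eq mult.commute)
qed

lemma block_coherence_nonneg:
  assumes "R > 0" and "d > 0" and "Phi \<in> carrier_mat L L" and "Psi \<in> carrier_mat L L"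
  shows "block_coherence R d Phi Psi \<ge> 0"
proof -
  have P: "col_block d Phi 0 \<in> carrier_mat L d" and Q: "col_block d Psi 0 \<in> carrier_mat L d"
    using col_block_carrier assms(3,4) by blast+
  have "mat_adjoint (col_block d Phi 0) * col_block d Psi 0 \<in> carrier_mat d d"
    using mat_adjoint_carrier[OF P] Q by simp
  then have "0 \<le> real d * block_coherence R d Phi Psi"
    using order_trans[OF spec_norm_nonneg[OF _ \<open>d > 0\<close>]
        spec_norm_le_block_coherence[OF \<open>d > 0\<close> \<open>R > 0\<close> \<open>R > 0\<close>]] by blast
  then show ?thesis using \<open>d > 0\<close> by (simp add: zero_le_mult_iff)
qed

lemma cinner_col_blocks_le_block_coherence:
  assumes Phi: "Phi \<in> carrier_mat L L" and Psi: "Psi \<in> carrier_mat L L"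
    and d: "d > 0" and l: "l < R" and r: "r < R"
    and u: "u \<in> carrier_vec d" and v: "v \<in> carrier_vec d"
  shows "cmod (cinner (col_block d Phi l *\<^sub>v u) (col_block d Psi r *\<^sub>v v))
           \<le> real d * block_coherence R d Phi Psi * vnorm2 u * vnorm2 v"
proof -
  let ?P = "col_block d Phi l" and ?Q = "col_block d Psi r"
  have P: "?P \<in> carrier_mat L d" and Q: "?Q \<in> carrier_mat L d"
    using col_block_carrier Phi Psi by blast+
  have "cinner (?P *\<^sub>v u) (?Q *\<^sub>v v) = cinner u (mat_adjoint ?P *\<^sub>v (?Q *\<^sub>v v))"
    using cinner_mat_adjoint[OF P u] Q v by simp
  also have "mat_adjoint ?P *\<^sub>v (?Q *\<^sub>v v) = (mat_adjoint ?P * ?Q) *\<^sub>v v"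
    using assoc_mult_mat_vec[OF mat_adjoint_carrier[OF P] Q v] by simp
  finally have "cmod (cinner (?P *\<^sub>v u) (?Q *\<^sub>v v))
                  \<le> spec_norm (mat_adjoint ?P * ?Q) * vnorm2 u * vnorm2 v"
    using cinner_mult_mat_vec_le_spec_norm[OF _ d u v, of "mat_adjoint ?P * ?Q"]
      mat_adjoint_carrier[OF P] Q unfolding vnorm2_eq_sqrt_sq_norm_vec by simp
  also have "\<dots> \<le> real d * block_coherence R d Phi Psi * vnorm2 u * vnorm2 v"
    using spec_norm_le_block_coherence[OF d l r, of Phi Psi]
    by (intro mult_right_mono) (simp_all add: vnorm2_eq_sqrt_sq_norm_vec sq_norm_vec_nonneg)
  finally show ?thesis .
qed

lemma block_expansion_eq_mult_mat_vec:
  assumes M: "M \<in> carrier_mat L (R*d)" and x: "x \<in> carrier_vec L" and a: "a \<in> carrier_vec (R*d)"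
    and expansion: "\<forall>i<L. x $ i = (\<Sum>l<R. (col_block d M l *\<^sub>v vec_block d a l) $ i)"
  shows "x = M *\<^sub>v a"
proof (rule eq_vecI)
  fix i assume "i < dim_vec (M *\<^sub>v a)"
  then have "i < L" using M by simp
  then show "x $ i = (M *\<^sub>v a) $ i"
    using expansion mult_mat_vec_eq_sum_blocks[OF M a] by simp
qed (use x M in simp)

lemma block_uncertainty:
  assumes "R > 0" and d: "d > 0" and L: "L = R * d"
    and Phi: "unitary_mat L Phi" and Psi: "unitary_mat L Psi"
    and x: "x \<in> carrier_vec L" and a: "a \<in> carrier_vec L" and b: "b \<in> carrier_vec L"
    and "x \<noteq> 0\<^sub>v L"
    and xa: "\<forall>i<L. x $ i = (\<Sum>l<R. (col_block d Phi l *\<^sub>v vec_block d a l) $ i)"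
    and xb: "\<forall>i<L. x $ i = (\<Sum>l<R. (col_block d Psi l *\<^sub>v vec_block d b l) $ i)"
  shows "1 \<le> real d * block_coherence R d Phi Psi * sqrt (real (norm20 R d a) * real (norm20 R d b))"
proof -
  have Phi_c: "Phi \<in> carrier_mat L L" and Psi_c: "Psi \<in> carrier_mat L L"
    using Phi Psi unfolding unitary_mat_def by auto
  define \<mu> where "\<mu> = real d * block_coherence R d Phi Psi"
  define \<alpha> where "\<alpha> l = vnorm2 (vec_block d a l)" for l
  define \<beta> where "\<beta> r = vnorm2 (vec_block d b r)" for r
  have "\<mu> \<ge> 0" unfolding \<mu>_def using block_coherence_nonneg[OF \<open>R > 0\<close> d Phi_c Psi_c] by simp
  have "x = Phi *\<^sub>v a" "x = Psi *\<^sub>v b"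
    using block_expansion_eq_mult_mat_vec Phi_c Psi_c x a b xa xb unfolding L by blast+
  then have "sq_norm_vec a = sq_norm_vec x" "sq_norm_vec b = sq_norm_vec x"
    using sq_norm_vec_mult_unitary[OF Phi a] sq_norm_vec_mult_unitary[OF Psi b] by simp_all
  then have sum_\<alpha>: "(\<Sum>l<R. \<alpha> l) \<le> sqrt (norm20 R d a) * sqrt (sq_norm_vec x)"
    and sum_\<beta>: "(\<Sum>r<R. \<beta> r) \<le> sqrt (norm20 R d b) * sqrt (sq_norm_vec x)"
    using sum_vnorm2_blocks_le a b unfolding \<alpha>_def \<beta>_def L by metis+
  have "sq_norm_vec x \<le> (\<Sum>l<R. \<Sum>r<R. cmod (cinner (col_block d Phi l *\<^sub>v vec_block d a l)
                                                  (col_block d Psi r *\<^sub>v vec_block d b r)))"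
    by (rule sq_norm_vec_le_sum_cross_cinner[OF x
        mult_mat_vec_carrier[OF col_block_carrier[OF Phi_c] vec_block_carrier]
        mult_mat_vec_carrier[OF col_block_carrier[OF Psi_c] vec_block_carrier] xa xb])
  also have "\<dots> \<le> (\<Sum>l<R. \<Sum>r<R. \<mu> * \<alpha> l * \<beta> r)"
    unfolding \<mu>_def \<alpha>_def \<beta>_def
    using cinner_col_blocks_le_block_coherence[OF Phi_c Psi_c d _ _ vec_block_carrier vec_block_carrier]
    by (intro sum_mono) auto
  also have "\<dots> = \<mu> * (\<Sum>l<R. \<Sum>r<R. \<alpha> l * \<beta> r)"
    by (simp add: sum_distrib_left mult.assoc)
  also have "\<dots> = \<mu> * ((\<Sum>l<R. \<alpha> l) * (\<Sum>r<R. \<beta> r))"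
    by (simp only: sum_product)
  also have "\<dots> \<le> \<mu> * ((sqrt (norm20 R d a) * sqrt (sq_norm_vec x)) * (sqrt (norm20 R d b) * sqrt (sq_norm_vec x)))"
    using sum_\<alpha> sum_\<beta> \<open>\<mu> \<ge> 0\<close>
    by (intro mult_left_mono mult_mono) (simp_all add: \<beta>_def vnorm2_def sum_nonneg sq_norm_vec_nonneg)
  also have "\<dots> = \<mu> * sqrt (norm20 R d a * norm20 R d b) * sq_norm_vec x"
    using sq_norm_vec_nonneg[of x] by (simp add: real_sqrt_mult mult_ac)
  finally show ?thesis
    unfolding \<mu>_def using sq_norm_vec_pos[OF x \<open>x \<noteq> 0\<^sub>v L\<close>] by simp
qed

theorem theorem1:
  fixes R d L :: nat and Phi Psi :: "complex mat" and x a b :: "complex vec"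
  assumes "R > 0" and "d > 0" and "L = R * d"
    and "unitary_mat L Phi" and "unitary_mat L Psi"
    and "x \<in> carrier_vec L" and "a \<in> carrier_vec L" and "b \<in> carrier_vec L"
    and "x \<noteq> 0\<^sub>v L"
    and "\<forall>i<L. x $ i = (\<Sum>l<R. (col_block d Phi l *\<^sub>v vec_block d a l) $ i)"
    and "\<forall>i<L. x $ i = (\<Sum>l<R. (col_block d Psi l *\<^sub>v vec_block d b l) $ i)"
  shows "(real (norm20 R d a) + real (norm20 R d b)) / 2
           \<ge> sqrt (real (norm20 R d a) * real (norm20 R d b))
       \<and> sqrt (real (norm20 R d a) * real (norm20 R d b))
           \<ge> 1 / (real d * block_coherence R d Phi Psi)"
proof
  let ?\<mu> = "real d * block_coherence R d Phi Psi"
  let ?s = "sqrt (real (norm20 R d a) * real (norm20 R d b))"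
  show "?s \<le> (real (norm20 R d a) + real (norm20 R d b)) / 2"
    by (rule arith_geo_mean_sqrt) auto
  have "1 \<le> ?\<mu> * ?s" by (rule block_uncertainty[OF assms])
  moreover have "?\<mu> > 0"
  proof (rule ccontr)
    assume "\<not> ?\<mu> > 0"
    then have "?\<mu> * ?s \<le> 0" by (simp add: mult_nonpos_nonneg)
    with \<open>1 \<le> ?\<mu> * ?s\<close> show False by simp
  qed
  ultimately show "1 / ?\<mu> \<le> ?s" by (simp add: divide_le_eq mult.commute)
qed

end
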